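(* Let $\mathcal{X}$ be an input alphabet, $\mathcal{Z}$ an output alphabet, $q(\cdot\mid\cdot)$ an $\varepsilon$-LDP mechanism from $\mathcal{X}$ to $\mathcal{Z}$, $p$ any reference distribution on $\mathcal{Z}$, and $N\ge1$ any number of candidates. Then the MRC index distribution $\pi^{\mathrm{mrc}}$ is a $2\varepsilon$-LDP mechanism, i.e. for all $\mathbf{x},\mathbf{x}'\in\mathcal{X}$, all candidate tuples $(\mathbf{z}_1,\dots,\mathbf{z}_N)\in\mathcal{Z}^N$ and all $k\in[N]$, $\pi^{\mathrm{mrc}}_{\mathbf{x}}(k)\le e^{2\varepsilon}\pi^{\mathrm{mrc}}_{\mathbf{x}'}(k)$.
   Context: A mechanism $q$ maps $\mathbf{x}\in\mathcal{X}$ to a random $\mathbf{z}\in\mathcal{Z}$ with conditional density (or pmf) $q(\mathbf{z}\mid\mathbf{x})$; it is $\varepsilon$-LDP if $q(\mathbf{z}\mid\mathbf{x})\le e^{\varepsilon}q(\mathbf{z}\mid\mathbf{x}')$ for all $\mathbf{x},\mathbf{x}',\mathbf{z}$. When a mechanism also depends on shared randomness $\mathbf{u}$ (known to user and server, independent of $\mathbf{x}$), the $\varepsilon$-LDP requirement is that the inequality holds for every fixed value of $\mathbf{u}$. Minimal Random Coding (MRC): draw candidates $\mathbf{z}_1,\dots,\mathbf{z}_N$ i.i.d. from $p$ (the shared randomness), set $w(k)=q(\mathbf{z}_k\mid\mathbf{x})/p(\mathbf{z}_k)$ and $\pi^{\mathrm{mrc}}_{\mathbf{x}}(k)=w(k)/\sum_{k'=1}^N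 w(k')$ for $k\in[N]$; the mechanism outputs the index $K\sim\pi^{\mathrm{mrc}}_{\mathbf{x}}$. *)

theory Defs
  imports "HOL-Analysis.Analysis"
begin

(* A mechanism is given by its conditional density / pmf q x z = q(z | x) (nonnegative). *)
definition eps_LDP :: "real \<Rightarrow> ('x \<Rightarrow> 'z \<Rightarrow> real) \<Rightarrow> bool" where
  "eps_LDP \<epsilon> q \<longleftrightarrow> (\<forall>x x' z. q x z \<le> exp \<epsilon> * q x' z)"

definition mrc_weight :: "('x \<Rightarrow> 'z \<Rightarrow> real) \<Rightarrow> ('z \<Rightarrow> real) \<Rightarrow> (nat \<Rightarrow> 'z) \<Rightarrow> 'x \<Rightarrow> nat \<Rightarrow> real" where
  "mrc_weight q p zs x k = q x (zs k) / p (zs k)"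

definition pi_mrc :: "('x \<Rightarrow> 'z \<Rightarrow> real) \<Rightarrow> ('z \<Rightarrow> real) \<Rightarrow> nat \<Rightarrow> (nat \<Rightarrow> 'z) \<Rightarrow> 'x \<Rightarrow> nat \<Rightarrow> real" where
  "pi_mrc q p N zs x k = mrc_weight q p zs x k / (\<Sum>k'\<in>{1..N}. mrc_weight q p zs x k')"

end

theory Submission
  imports Defs
begin

text \<open>Each importance weight changes by at most a factor \<open>e\<^sup>\<epsilon>\<close> when the input changes,
  and so does their sum; the normalized weight is a ratio of the two, so it changes by at
  most \<open>e\<^sup>2\<^sup>\<epsilon>\<close>.\<close>

lemma normalized_le_power2:
  fixes w w' :: "'a \<Rightarrow> real"
  assumes A: "finite A" "k \<in> A"
    and nonneg: "\<And>j. j \<in> A \<Longrightarrow> 0 \<le> w j" "\<And>j. j \<in> A \<Longrightarrow> 0 \<le> w' j"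
    and le: "\<And>j. j \<in> A \<Longrightarrow> w j \<le> c * w' j"
    and le': "\<And>j. j \<in> A \<Longrightarrow> w' j \<le> c * w j"
  shows "w k / sum w A \<le> c\<^sup>2 * (w' k / sum w' A)"
proof -
  define S S' where "S = sum w A" and "S' = sum w' A"
  have S_nonneg: "0 \<le> S" "0 \<le> S'"
    unfolding S_def S'_def using nonneg by (auto intro: sum_nonneg)
  have term_le_sum: "w' k \<le> S'"
    unfolding S'_def using member_le_sum[of k A w'] A nonneg(2) by blast
  have sum_le: "S' \<le> c * S"
    unfolding S_def S'_def sum_distrib_left using le' by (rule sum_mono)
  show ?thesis
  proof (cases "S = 0 \<or> S' = 0")
    case True
    moreover have "S' = 0 \<Longrightarrow> w k = 0"
      using term_le_sum le[OF A(2)] nonneg(1,2)[OF A(2)] by (simp add: antisym)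
    ultimately show ?thesis
      using S_nonneg nonneg(2)[OF A(2)] by (auto simp: S_def S'_def)
  next
    case False
    with S_nonneg have S_pos: "0 < S" "0 < S'" by auto
    with sum_le have c_pos: "0 < c" by (smt (verit) mult_nonpos_nonneg)
    have "w k / S \<le> c * w' k / S"
      using le[OF A(2)] S_pos by (simp add: divide_right_mono)
    also have "\<dots> \<le> c * w' k * (c / S')"
    proof -
      have "1 / S \<le> c / S'"
        using sum_le S_pos by (simp add: field_simps)
      then have "c * w' k * (1 / S) \<le> c * w' k * (c / S')"
        using c_pos nonneg(2)[OF A(2)] by (intro mult_left_mono) auto
      then show ?thesis by simp
    qed
    finally show ?thesis
      by (simp add: S_def S'_def power2_eq_square mult_ac)
  qed
qed

lemma mrc_weight_le_exp:
  assumes "eps_LDP \<epsilon> q" and "p (zs k) \<ge> 0"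
  shows "mrc_weight q p zs x k \<le> exp \<epsilon> * mrc_weight q p zs x' k"
proof -
  have "q x (zs k) \<le> exp \<epsilon> * q x' (zs k)"
    using assms(1) unfolding eps_LDP_def by blast
  then show ?thesis
    unfolding mrc_weight_def using assms(2) by (simp add: divide_right_mono)
qed

lemma mrc_weight_nonneg:
  assumes "q x (zs k) \<ge> 0" and "p (zs k) \<ge> 0"
  shows "mrc_weight q p zs x k \<ge> 0"
  unfolding mrc_weight_def using assms by simp

theorem theorem2:
  fixes q :: "'x \<Rightarrow> 'z \<Rightarrow> real" and p :: "'z \<Rightarrow> real"
    and \<epsilon> :: real and N :: nat and zs :: "nat \<Rightarrow> 'z"
  assumes q_nonneg: "\<forall>x z. q x z \<ge> 0"
    and ldp: "eps_LDP \<epsilon> q"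
    and p_nonneg: "\<forall>z. p z \<ge> 0"
    and N: "N \<ge> 1"
    and cand: "\<forall>k\<in>{1..N}. p (zs k) > 0"
  shows "\<forall>x x'. \<forall>k\<in>{1..N}. pi_mrc q p N zs x k \<le> exp (2 * \<epsilon>) * pi_mrc q p N zs x' k"
proof (intro allI ballI)
  fix x x' k
  assume "k \<in> {1..N}"
  then have "mrc_weight q p zs x k / (\<Sum>j\<in>{1..N}. mrc_weight q p zs x j)
      \<le> (exp \<epsilon>)\<^sup>2 * (mrc_weight q p zs x' k / (\<Sum>j\<in>{1..N}. mrc_weight q p zs x' j))"
    using q_nonneg p_nonneg
    by (intro normalized_le_power2 mrc_weight_nonneg mrc_weight_le_exp[OF ldp]) auto
  then show "pi_mrc q p N zs x k \<le> exp (2 * \<epsilon>) * pi_mrc q p N zs x' k"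
    by (simp add: pi_mrc_def exp_double)
qed

end
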